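(* Let $\mu$ be a non-homogeneous Gibbs capacity and $\eta\in(0,1)$. Almost surely, there exists a positive sequence $(\epsilon^1_j)_{j\ge1}$ converging to $0$ such that for $j$ large enough, for all $w\in\mathcal S_j(\eta)$, $$j\big(H_\ell(\eta_\ell)-\epsilon^1_j\big)\le-\log_2\mu(I_w)\le j\big(H_r(\eta_r)+\epsilon^1_j\big).$$
   Context: Fix $d\ge1$; $\Sigma_j$ is the set of words of length $j$ over $\{0,1\}^d$, $\Sigma^*=\bigcup_{j\ge1}\Sigma_j$, $\Sigma=(\{0,1\}^d)^{\mathbb N_+}$ with standard ultrametric and shift $\sigma$, $[w]$ the cylinder of $w$, $|w|$ the length; for $w\in\Sigma_j$, $I_w=\prod_{i=1}^d[x_w^{(i)},x_w^{(i)}+2^{-j}]$, $x_w^{(i)}=\sum_{k=1}^jw_k^{(i)}2^{-k}$. A Gibbs capacity is $\mu(I_w)=K\nu([w])^\alpha e^{-\beta|w|}$ with $K>0$, $(\alpha,\beta)\in[0,\infty)^2\setminus\{(0,0)\}$, where $\nu$ is a Gibbs measure on $\Sigma$ for a Hölder potential $\psi$: $C^{-1}e^{\Psi([w])-|w|P(\sigma,\psi)}\le\nu([w])\le Ce^{\Psi([w])-|w|P(\sigma,\psi)}$ with $\Psi([w])=\sup_{t\in[w]}\sum_{i<|w|}\psi(\sigma^it)$, $P$ the topological pressure. Non-homogeneous: $\alpha>0$ and $\psi$ not cohomologous to a constant. $\tau_\mu(q)=\lim_j-\frac1j\log_2\sum_{w\in\Sigma_j}\mu(I_w)^q$; $H_{\min}=\tau_\mu'(+\infty)<H_s=\tau_\mu'(0)<H_{\max}=\tau_\mu'(-\infty)$;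 $D_\mu=\tau_\mu^*$ (Legendre transform), finite exactly on $[H_{\min},H_{\max}]$, strictly concave, maximal $=d$ at $H_s$. $H_\ell(\eta_\ell)=\min\{H\ge0:D_\mu(H)\ge d(1-\eta)\}$ and $H_r(\eta_r)=\max\{H:D_\mu(H)\ge d(1-\eta)\}$. Sampling: $(p_w)_{w\in\Sigma^*}$ independent Bernoulli with $\mathbb P(p_w=1)=2^{-d(1-\eta)|w|}$, $\mathcal S_j(\eta)=\{w\in\Sigma_j:p_w=1\}$. *)

theory Defs
  imports "HOL-Probability.Probability"
begin

text \<open>Letters of the alphabet {0,1}^d are boolean lists of length d; words are lists of letters;
  points of Sigma are sequences indexed by nat (index 0 plays the role of index 1).\<close>

definition letters :: "nat \<Rightarrow> bool list set" where
  "letters d = {x. length x = d}"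

definition words :: "nat \<Rightarrow> nat \<Rightarrow> bool list list set" where
  "words d j = {w. length w = j \<and> set w \<subseteq> letters d}"

definition allwords :: "nat \<Rightarrow> bool list list set" where
  "allwords d = {w. 1 \<le> length w \<and> set w \<subseteq> letters d}"

definition seqs :: "nat \<Rightarrow> (nat \<Rightarrow> bool list) set" where
  "seqs d = {t. \<forall>i. t i \<in> letters d}"

definition shift :: "(nat \<Rightarrow> bool list) \<Rightarrow> (nat \<Rightarrow> bool list)" where
  "shift t = (\<lambda>i. t (Suc i))"

definition cyl :: "nat \<Rightarrow> bool list list \<Rightarrow> (nat \<Rightarrow> bool list) set" where
  "cyl d w = {t \<in> seqs d. \<forall>i<length w. t i = w ! i}"

definition birkhoff :: "((nat \<Rightarrow> bool list) \<Rightarrow> real) \<Rightarrow> nat \<Rightarrow> (nat \<Rightarrow> bool list) \<Rightarrow> real" where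
  "birkhoff \<psi> n t = (\<Sum>i<n. \<psi> ((shift ^^ i) t))"

definition Psi :: "nat \<Rightarrow> ((nat \<Rightarrow> bool list) \<Rightarrow> real) \<Rightarrow> bool list list \<Rightarrow> real" where
  "Psi d \<psi> w = (SUP t\<in>cyl d w. birkhoff \<psi> (length w) t)"

definition pressure :: "nat \<Rightarrow> ((nat \<Rightarrow> bool list) \<Rightarrow> real) \<Rightarrow> real" where
  "pressure d \<psi> = lim (\<lambda>n. ln (\<Sum>w\<in>words d n. exp (Psi d \<psi> w)) / real n)"

text \<open>Hoelder continuity w.r.t. the standard ultrametric (distance b^(-n), n = first index of
  disagreement), written out.\<close>
definition holder :: "nat \<Rightarrow> ((nat \<Rightarrow> bool list) \<Rightarrow> real) \<Rightarrow> bool" where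
  "holder d \<psi> \<longleftrightarrow> (\<exists>C \<gamma>. \<gamma> > 0 \<and> (\<forall>s\<in>seqs d. \<forall>t\<in>seqs d. \<forall>n.
      (\<forall>i<n. s i = t i) \<longrightarrow> \<bar>\<psi> s - \<psi> t\<bar> \<le> C * exp (- \<gamma> * real n)))"

definition seq_continuous :: "nat \<Rightarrow> ((nat \<Rightarrow> bool list) \<Rightarrow> real) \<Rightarrow> bool" where
  "seq_continuous d u \<longleftrightarrow> (\<forall>t\<in>seqs d. \<forall>e>0. \<exists>n. \<forall>s\<in>seqs d.
      (\<forall>i<n. s i = t i) \<longrightarrow> \<bar>u s - u t\<bar> < e)"

definition cohom_const :: "nat \<Rightarrow> ((nat \<Rightarrow> bool list) \<Rightarrow> real) \<Rightarrow> bool" where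
  "cohom_const d \<psi> \<longleftrightarrow> (\<exists>u c. seq_continuous d u \<and>
      (\<forall>t\<in>seqs d. \<psi> t = c + u (shift t) - u t))"

text \<open>Gibbs (probability) measure on Sigma (Borel sigma-algebra = generated by cylinders).\<close>
definition gibbs_measure :: "nat \<Rightarrow> ((nat \<Rightarrow> bool list) \<Rightarrow> real) \<Rightarrow> (nat \<Rightarrow> bool list) measure \<Rightarrow> bool" where
  "gibbs_measure d \<psi> \<nu> \<longleftrightarrow> prob_space \<nu> \<and> space \<nu> = seqs d \<and>
     sets \<nu> = sigma_sets (seqs d) (range (cyl d)) \<and>
     (\<exists>C>0. \<forall>w\<in>allwords d.
        exp (Psi d \<psi> w - real (length w) * pressure d \<psi>) / C \<le> measure \<nu> (cyl d w) \<and>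
        measure \<nu> (cyl d w) \<le> C * exp (Psi d \<psi> w - real (length w) * pressure d \<psi>))"

text \<open>Gibbs capacity: value mu(I_w) as a function of the word w.\<close>
definition cap :: "nat \<Rightarrow> real \<Rightarrow> real \<Rightarrow> real \<Rightarrow> (nat \<Rightarrow> bool list) measure \<Rightarrow> bool list list \<Rightarrow> real" where
  "cap d K \<alpha> \<beta> \<nu> w = K * measure \<nu> (cyl d w) powr \<alpha> * exp (- \<beta> * real (length w))"

definition tau :: "nat \<Rightarrow> (bool list list \<Rightarrow> real) \<Rightarrow> real \<Rightarrow> real" where
  "tau d \<mu> q = lim (\<lambda>j. - log 2 (\<Sum>w\<in>words d j. \<mu> w powr q) / real j)"

text \<open>D_mu = Legendre transform of tau_mu (value -infinity outside [H_min,H_max]).\<close>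
definition Dmu :: "nat \<Rightarrow> (bool list list \<Rightarrow> real) \<Rightarrow> real \<Rightarrow> ereal" where
  "Dmu d \<mu> H = (INF q. ereal (q * H - tau d \<mu> q))"

definition Hl :: "nat \<Rightarrow> (bool list list \<Rightarrow> real) \<Rightarrow> real \<Rightarrow> real" where
  "Hl d \<mu> \<eta> = Inf {H. H \<ge> 0 \<and> Dmu d \<mu> H \<ge> ereal (real d * (1 - \<eta>))}"

definition Hr :: "nat \<Rightarrow> (bool list list \<Rightarrow> real) \<Rightarrow> real \<Rightarrow> real" where
  "Hr d \<mu> \<eta> = Sup {H. Dmu d \<mu> H \<ge> ereal (real d * (1 - \<eta>))}"

end

theory Submission
  imports Defs
begin

text \<open>The Gibbs property and bounded distortion of Hoelder Birkhoff sums make the capacity almost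
  multiplicative: \<open>log\<^sub>2 \<mu>(I\<^sub>u\<^sub>v)\<close> differs from \<open>log\<^sub>2 \<mu>(I\<^sub>u) + log\<^sub>2 \<mu>(I\<^sub>v)\<close> by a bounded amount.
  Hence \<open>log\<^sub>2 \<Sum>\<^sub>w \<mu>(I\<^sub>w)\<^sup>q\<close> is almost additive in the generation and \<open>\<tau>\<^sub>\<mu>\<close> exists by Fekete's lemma.
  If \<open>H < H\<^sub>\<ell>\<close>, Legendre duality yields \<open>q \<ge> 0\<close> with \<open>qH - \<tau>\<^sub>\<mu>(q) < d(1 - \<eta>)\<close>, and Chebyshev's
  inequality for the \<open>q\<close>-th moment bounds the number of words of generation \<open>j\<close> with
  \<open>-log\<^sub>2 \<mu>(I\<^sub>w) < jH\<close> by \<open>2\<^bsup>j(d(1 - \<eta>) - \<rho>)\<^esup>\<close>. Each of them is sampled with probability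
  \<open>2\<^bsup>-jd(1 - \<eta>)\<^esup>\<close>, so by the union bound and Borel--Cantelli almost surely none is sampled
  eventually; the case \<open>H > H\<^sub>r\<close> is symmetric with \<open>q \<le> 0\<close>. Letting \<open>H\<close> approach both bounds
  gives the vanishing \<open>\<epsilon>\<^sub>j\<close>. Only first moments of the sampling enter.\<close>

section \<open>Almost additive sequences and elementary estimates\<close>

lemma almost_additive_linear_bound:
  fixes a :: "nat \<Rightarrow> real"
  assumes almost_add: "\<And>m n. m \<ge> 1 \<Longrightarrow> n \<ge> 1 \<Longrightarrow> \<bar>a (m + n) - a m - a n\<bar> \<le> B"
    and "m \<ge> 1" "j \<ge> 1"
  shows "\<bar>a j - real j / real m * a m\<bar> \<le> real j / real m * B
           + (\<Sum>r=1..m. \<bar>a r - real r / real m * a m\<bar>)"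
  using \<open>j \<ge> 1\<close>
proof (induction j rule: less_induct)
  case (less j)
  define E where "E = (\<Sum>r=1..m. \<bar>a r - real r / real m * a m\<bar>)"
  have "B \<ge> 0" using almost_add[of 1 1] by linarith
  show ?case
  proof (cases "j \<le> m")
    case True
    then have "\<bar>a j - real j / real m * a m\<bar> \<le> E"
      unfolding E_def using less.prems
      by (intro member_le_sum[where f = "\<lambda>r. \<bar>a r - real r / real m * a m\<bar>"]) auto
    moreover have "real j / real m * B \<ge> 0" using \<open>B \<ge> 0\<close> by simp
    ultimately show ?thesis unfolding E_def by linarith
  next
    case False
    then have "j = (j - m) + m" "j - m \<ge> 1" by auto
    then have "\<bar>a j - a (j - m) - a m\<bar> \<le> B" using almost_add[of "j - m" m] \<open>m \<ge> 1\<close> by simp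
    moreover have "\<bar>a (j - m) - real (j - m) / real m * a m\<bar> \<le> real (j - m) / real m * B + E"
      using less.IH[of "j - m"] \<open>j - m \<ge> 1\<close> \<open>m \<ge> 1\<close> by (simp add: E_def)
    moreover have "real (j - m) / real m = real j / real m - 1"
      using False \<open>m \<ge> 1\<close> by (simp add: of_nat_diff field_simps)
    ultimately show ?thesis by (simp add: E_def left_diff_distrib)
  qed
qed

lemma almost_additive_convergent:
  fixes a :: "nat \<Rightarrow> real"
  assumes almost_add: "\<And>m n. m \<ge> 1 \<Longrightarrow> n \<ge> 1 \<Longrightarrow> \<bar>a (m + n) - a m - a n\<bar> \<le> B"
  shows "convergent (\<lambda>j. a j / real j)"
proof (rule Cauchy_convergent, rule CauchyI)
  define E where "E m = (\<Sum>r=1..m. \<bar>a r - real r / real m * a m\<bar>)" for m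
  have close: "\<bar>a j / real j - a m / real m\<bar> \<le> B / real m + E m / real j"
    if "m \<ge> 1" "j \<ge> 1" for m j
  proof -
    have "a j / real j - a m / real m = (a j - real j / real m * a m) / real j"
      using that by (simp add: field_simps)
    also have "\<bar>\<dots>\<bar> \<le> (real j / real m * B + E m) / real j"
      using almost_additive_linear_bound[OF almost_add that] that
      by (simp add: abs_div divide_right_mono E_def)
    also have "\<dots> = B / real m + E m / real j" using that by (simp add: field_simps)
    finally show ?thesis .
  qed
  fix e :: real
  assume "e > 0"
  have "\<forall>\<^sub>F m in sequentially. B / real m < e / 4"
    using \<open>e > 0\<close> by real_asymp
  then obtain m where m: "m \<ge> 1" "B / real m < e / 4"
    by (metis eventually_at_top_linorder nle_le)
  have "\<forall>\<^sub>F j in sequentially. E m / real j < e / 4"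
    using \<open>e > 0\<close> by real_asymp
  then obtain N where N: "\<And>j. j \<ge> N \<Longrightarrow> E m / real j < e / 4"
    by (auto simp: eventually_at_top_linorder)
  show "\<exists>M. \<forall>j\<ge>M. \<forall>k\<ge>M. norm (a j / real j - a k / real k) < e"
  proof (intro exI[of _ "max 1 N"] allI impI)
    fix j k assume "max 1 N \<le> j" "max 1 N \<le> k"
    then have "j \<ge> 1" "k \<ge> 1" "E m / real j < e / 4" "E m / real k < e / 4" using N by auto
    then show "norm (a j / real j - a k / real k) < e"
      using close[OF m(1) \<open>j \<ge> 1\<close>] close[OF m(1) \<open>k \<ge> 1\<close>] m(2) unfolding real_norm_def by linarith
  qed
qed

lemma card_mult_exp_mean_le_sum_exp:
  fixes y :: "'a \<Rightarrow> real"
  assumes "finite A" "A \<noteq> {}"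
  shows "real (card A) * exp ((\<Sum>x\<in>A. y x) / real (card A)) \<le> (\<Sum>x\<in>A. exp (y x))"
proof -
  define N where "N = real (card A)"
  define m where "m = (\<Sum>x\<in>A. y x) / N"
  have "N > 0" using assms by (simp add: N_def card_gt_0_iff)
  text \<open>The tangent line of \<open>exp\<close> at the mean lies below the graph.\<close>
  have tangent: "exp m * (1 + (y x - m)) \<le> exp (y x)" for x
    using mult_left_mono[OF exp_ge_add_one_self[of "y x - m"], of "exp m"]
    by (simp add: exp_diff)
  have "(\<Sum>x\<in>A. exp m * (1 + (y x - m))) = exp m * (N + (\<Sum>x\<in>A. y x) - N * m)"
    by (simp add: sum_distrib_left[symmetric] sum.distrib sum_subtractf N_def algebra_simps)
  also have "\<dots> = N * exp m" using \<open>N > 0\<close> by (simp add: m_def)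
  finally show ?thesis
    using sum_mono[of A "\<lambda>x. exp m * (1 + (y x - m))" "\<lambda>x. exp (y x)"] tangent
    by (simp add: N_def m_def)
qed

lemma sum_power_diff_le_inverse:
  fixes r :: real
  assumes "0 < r" "r < 1"
  shows "(\<Sum>i<n. r ^ (n - i)) \<le> 1 / (1 - r)"
proof -
  have "(\<Sum>i<n. r ^ (n - i)) = (\<Sum>i<n. r ^ Suc i)"
    using sum.nat_diff_reindex[of "\<lambda>k. r ^ Suc k" n] by (simp add: Suc_diff_Suc)
  also have "\<dots> \<le> (\<Sum>i. r ^ Suc i)"
    using assms by (intro sum_le_suminf summable_mult summable_geometric) (auto simp: power_Suc)
  also have "\<dots> = r / (1 - r)"
    using suminf_mult[OF summable_geometric, of r r] assms by (simp add: suminf_geometric power_Suc)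
  also have "\<dots> \<le> 1 / (1 - r)" using assms by (simp add: divide_right_mono)
  finally show ?thesis .
qed

lemma vanishing_bound_of_finite_sets:
  fixes F :: "nat \<Rightarrow> real set"
  assumes fin: "\<And>j. finite (F j)"
    and small: "\<And>\<delta>. \<delta> > 0 \<Longrightarrow> \<forall>\<^sub>F j in sequentially. \<forall>x\<in>F j. x \<le> \<delta>"
  shows "\<exists>\<epsilon>. (\<forall>j. 0 < \<epsilon> j) \<and> \<epsilon> \<longlonglongrightarrow> 0 \<and> (\<forall>j. \<forall>x\<in>F j. x \<le> \<epsilon> j)"
proof -
  define m where "m j = Max (insert 0 (F j))" for j
  have m_ge: "x \<le> m j" if "x \<in> F j" for x j
    using fin that by (auto simp: m_def)
  have m_nonneg: "0 \<le> m j" for j using fin by (simp add: m_def)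
  have "m \<longlonglongrightarrow> 0"
  proof (rule order_tendstoI)
    fix a :: real assume "a < 0"
    then have "a < m j" for j using m_nonneg[of j] by linarith
    then show "\<forall>\<^sub>F j in sequentially. a < m j" by simp
  next
    fix a :: real assume "0 < a"
    then have "\<forall>\<^sub>F j in sequentially. \<forall>x\<in>F j. x \<le> a / 2" by (intro small) simp
    then show "\<forall>\<^sub>F j in sequentially. m j < a"
      by eventually_elim (use fin \<open>0 < a\<close> in \<open>auto simp: m_def\<close>)
  qed
  then have "(\<lambda>j. m j + inverse (real (Suc j))) \<longlonglongrightarrow> 0 + 0"
    by (intro tendsto_add LIMSEQ_inverse_real_of_nat)
  moreover have "0 < m j + inverse (real (Suc j))" for j
    using m_nonneg[of j] by (simp add: add_nonneg_pos)
  moreover have "x \<le> m j + inverse (real (Suc j))" if "x \<in> F j" for x j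
    using m_ge[OF that] by (simp add: add_increasing2)
  ultimately show ?thesis by (intro exI[of _ "\<lambda>j. m j + inverse (real (Suc j))"]) auto
qed

lemma AE_eventually_none_sampled:
  fixes \<Omega> :: "'o measure" and p :: "'w \<Rightarrow> 'o \<Rightarrow> bool"
  assumes "prob_space \<Omega>" and fin: "\<And>j. finite (B j)"
    and meas: "\<And>j w. w \<in> B j \<Longrightarrow> {\<omega>\<in>space \<Omega>. p w \<omega>} \<in> sets \<Omega>"
    and prob: "\<And>j w. w \<in> B j \<Longrightarrow> measure \<Omega> {\<omega>\<in>space \<Omega>. p w \<omega>} \<le> 2 powr (- (c * real j))"
    and "\<rho> > 0"
    and card: "\<forall>\<^sub>F j in sequentially. real (card (B j)) \<le> 2 powr (real j * (c - \<rho>))"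
  shows "AE \<omega> in \<Omega>. \<forall>\<^sub>F j in sequentially. \<forall>w\<in>B j. \<not> p w \<omega>"
proof -
  interpret prob_space \<Omega> by fact
  define A where "A j = (\<Union>w\<in>B j. {\<omega>\<in>space \<Omega>. p w \<omega>})" for j
  have A_sets: "A j \<in> sets \<Omega>" for j unfolding A_def using fin meas by blast
  have A_le: "measure \<Omega> (A j) \<le> real (card (B j)) * 2 powr (- (c * real j))" for j
  proof -
    have "measure \<Omega> (A j) \<le> (\<Sum>w\<in>B j. measure \<Omega> {\<omega>\<in>space \<Omega>. p w \<omega>})"
      unfolding A_def using fin meas by (intro measure_UNION_le) auto
    also have "\<dots> \<le> (\<Sum>w\<in>B j. 2 powr (- (c * real j)))" by (intro sum_mono prob)
    finally show ?thesis by simp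
  qed
  have "\<forall>\<^sub>F j in sequentially. norm (measure \<Omega> (A j)) \<le> (2 powr - \<rho>) ^ j"
    using card
  proof eventually_elim
    case (elim j)
    have "measure \<Omega> (A j) \<le> 2 powr (real j * (c - \<rho>)) * 2 powr (- (c * real j))"
      using A_le[of j] elim by (smt (verit) mult_right_mono powr_ge_zero)
    also have "\<dots> = (2 powr - \<rho>) ^ j"
      by (simp add: powr_add[symmetric] powr_realpow[symmetric] powr_powr algebra_simps)
    finally show ?case by simp
  qed
  then have "summable (\<lambda>j. measure \<Omega> (A j))"
    using \<open>\<rho> > 0\<close> by (intro summable_comparison_test_ev[OF _ summable_geometric])
      (auto simp: powr_minus_divide)
  then have "AE \<omega> in \<Omega>. \<forall>\<^sub>F j in sequentially. \<omega> \<in> space \<Omega> - A j"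
    using A_sets by (intro borel_cantelli_AE1) (auto simp: emeasure_eq_measure)
  then show ?thesis by (rule AE_mp) (auto simp: A_def elim: eventually_mono)
qed

section \<open>Words, cylinders and Gibbs capacities\<close>

lemma funpow_shift: "(shift ^^ i) t = (\<lambda>k. t (k + i))"
  by (induction i arbitrary: t) (auto simp: shift_def)

lemma funpow_shift_seqs: "t \<in> seqs d \<Longrightarrow> (shift ^^ i) t \<in> seqs d"
  by (simp add: seqs_def funpow_shift)

lemma birkhoff_add: "birkhoff \<psi> (m + n) t = birkhoff \<psi> m t + birkhoff \<psi> n ((shift ^^ m) t)"
  by (induction n) (auto simp: birkhoff_def funpow_shift add.commute add.left_commute)

lemma cyl_appendD:
  assumes "t \<in> cyl d (u @ v)"
  shows "t \<in> cyl d u" "(shift ^^ length u) t \<in> cyl d v"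
  using assms by (auto simp: cyl_def funpow_shift seqs_def nth_append
      dest: spec[where x = "_ + length u"])

lemma cyl_nonempty:
  assumes "set w \<subseteq> letters d"
  shows "(\<lambda>i. if i < length w then w ! i else replicate d False) \<in> cyl d w"
proof -
  have "length (w ! i) = d" if "i < length w" for i
    using assms nth_mem[OF that] by (auto simp: letters_def)
  then show ?thesis by (auto simp: cyl_def seqs_def letters_def)
qed

lemma words_eq_lists: "words d j = {xs. set xs \<subseteq> letters d \<and> length xs = j}"
  by (auto simp: words_def)

lemma finite_letters: "finite (letters d)"
  using finite_lists_length_eq[of "UNIV :: bool set" d] by (simp add: letters_def)

lemma card_letters: "card (letters d) = 2 ^ d"
  using card_lists_length_eq[of "UNIV :: bool set" d] by (simp add: letters_def)

lemma finite_words: "finite (words d j)"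
  unfolding words_eq_lists by (rule finite_lists_length_eq[OF finite_letters])

lemma card_words: "card (words d j) = 2 ^ (d * j)"
  unfolding words_eq_lists
  by (simp add: card_lists_length_eq[OF finite_letters] card_letters power_mult)

lemma words_nonempty: "words d j \<noteq> {}"
  by (auto simp: words_def letters_def intro!: exI[of _ "replicate j (replicate d False)"])

lemma words_subset_allwords: "j \<ge> 1 \<Longrightarrow> words d j \<subseteq> allwords d"
  by (auto simp: words_def allwords_def)

lemma words_add: "words d (m + n) = (\<lambda>(u, v). u @ v) ` (words d m \<times> words d n)"
proof (intro set_eqI iffI)
  fix w assume "w \<in> words d (m + n)"
  then have "take m w \<in> words d m" "drop m w \<in> words d n"
    by (auto simp: words_def dest!: in_set_takeD in_set_dropD)
  then show "w \<in> (\<lambda>(u, v). u @ v) ` (words d m \<times> words d n)"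
    by (auto intro!: image_eqI[of _ _ "(take m w, drop m w)"])
qed (auto simp: words_def)

lemma inj_on_append_words: "inj_on (\<lambda>(u, v). u @ v) (words d m \<times> words d n)"
  by (auto simp: inj_on_def words_def)

lemma holder_bounded_distortion:
  assumes "holder d \<psi>"
  obtains D where
    "\<And>w s t. s \<in> cyl d w \<Longrightarrow> t \<in> cyl d w \<Longrightarrow> birkhoff \<psi> (length w) s \<le> birkhoff \<psi> (length w) t + D"
proof -
  obtain C \<gamma> where "\<gamma> > 0" and hold: "\<And>s t n. s \<in> seqs d \<Longrightarrow> t \<in> seqs d \<Longrightarrow>
      (\<forall>i<n. s i = t i) \<Longrightarrow> \<bar>\<psi> s - \<psi> t\<bar> \<le> C * exp (- \<gamma> * real n)"
    using assms unfolding holder_def by blast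
  define r where "r = exp (- \<gamma>)"
  have r: "0 < r" "r < 1" using \<open>\<gamma> > 0\<close> by (auto simp: r_def)
  have "(\<lambda>_. replicate d False) \<in> seqs d" by (simp add: seqs_def letters_def)
  from hold[OF this this, of 0] have "C \<ge> 0" by simp
  have "birkhoff \<psi> (length w) s - birkhoff \<psi> (length w) t \<le> C / (1 - r)"
    if s: "s \<in> cyl d w" and t: "t \<in> cyl d w" for w s t
  proof -
    define n where "n = length w"
    text \<open>The \<open>i\<close>-th shifts of \<open>s\<close> and \<open>t\<close> still agree on their first \<open>n - i\<close> letters.\<close>
    have "\<psi> ((shift ^^ i) s) - \<psi> ((shift ^^ i) t) \<le> C * r ^ (n - i)" if "i < n" for i
    proof -
      have "\<forall>k<n - i. (shift ^^ i) s k = (shift ^^ i) t k"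
        using s t that by (auto simp: funpow_shift cyl_def n_def)
      then have "\<bar>\<psi> ((shift ^^ i) s) - \<psi> ((shift ^^ i) t)\<bar> \<le> C * exp (- \<gamma> * real (n - i))"
        using s t by (intro hold funpow_shift_seqs) (auto simp: cyl_def)
      then show ?thesis by (simp add: r_def exp_of_nat_mult[symmetric] mult.commute)
    qed
    then have "birkhoff \<psi> n s - birkhoff \<psi> n t \<le> (\<Sum>i<n. C * r ^ (n - i))"
      unfolding birkhoff_def sum_subtractf[symmetric] by (intro sum_mono) auto
    also have "\<dots> \<le> C / (1 - r)"
      using mult_left_mono[OF sum_power_diff_le_inverse[OF r] \<open>C \<ge> 0\<close>]
      by (simp add: sum_distrib_left)
    finally show ?thesis by (simp add: n_def)
  qed
  then show ?thesis using that[of "C / (1 - r)"] by (simp add: diff_le_eq add.commute)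
qed

lemma holder_Psi_almost_additive:
  assumes "holder d \<psi>"
  obtains D where "\<And>u v. set u \<subseteq> letters d \<Longrightarrow> set v \<subseteq> letters d \<Longrightarrow>
    \<bar>Psi d \<psi> (u @ v) - Psi d \<psi> u - Psi d \<psi> v\<bar> \<le> 2 * D"
proof -
  obtain D where distortion: "\<And>w s t. s \<in> cyl d w \<Longrightarrow> t \<in> cyl d w \<Longrightarrow>
      birkhoff \<psi> (length w) s \<le> birkhoff \<psi> (length w) t + D"
    using holder_bounded_distortion[OF assms] by blast
  have Psi_between: "birkhoff \<psi> (length w) t \<le> Psi d \<psi> w"
      "Psi d \<psi> w \<le> birkhoff \<psi> (length w) t + D" if "t \<in> cyl d w" for w t
  proof -
    have "bdd_above ((\<lambda>s. birkhoff \<psi> (length w) s) ` cyl d w)"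
      using distortion[OF _ that] by (intro bdd_aboveI2) blast
    then show "birkhoff \<psi> (length w) t \<le> Psi d \<psi> w"
      unfolding Psi_def by (rule cSUP_upper[OF that])
    show "Psi d \<psi> w \<le> birkhoff \<psi> (length w) t + D"
      unfolding Psi_def using that by (intro cSUP_least distortion[OF _ that]) auto
  qed
  have "\<bar>Psi d \<psi> (u @ v) - Psi d \<psi> u - Psi d \<psi> v\<bar> \<le> 2 * D"
    if "set u \<subseteq> letters d" "set v \<subseteq> letters d" for u v
  proof -
    define t where "t = (\<lambda>i. if i < length (u @ v) then (u @ v) ! i else replicate d False)"
    have t: "t \<in> cyl d (u @ v)" using cyl_nonempty[of "u @ v" d] that by (simp add: t_def)
    have "birkhoff \<psi> (length (u @ v)) t
        = birkhoff \<psi> (length u) t + birkhoff \<psi> (length v) ((shift ^^ length u) t)"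
      using birkhoff_add by simp
    then show ?thesis
      using Psi_between[OF t] Psi_between[OF cyl_appendD(1)[OF t]]
        Psi_between[OF cyl_appendD(2)[OF t]]
      by linarith
  qed
  then show ?thesis using that by blast
qed

lemma gibbs_ln_measure_cyl:
  assumes "gibbs_measure d \<psi> \<nu>"
  obtains C where "\<And>w. w \<in> allwords d \<Longrightarrow> 0 < measure \<nu> (cyl d w)"
    "\<And>w. w \<in> allwords d \<Longrightarrow>
      \<bar>ln (measure \<nu> (cyl d w)) - (Psi d \<psi> w - real (length w) * pressure d \<psi>)\<bar> \<le> C"
proof -
  obtain C where "C > 0" and gibbs: "\<And>w. w \<in> allwords d \<Longrightarrow>
      exp (Psi d \<psi> w - real (length w) * pressure d \<psi>) / C \<le> measure \<nu> (cyl d w) \<and>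
      measure \<nu> (cyl d w) \<le> C * exp (Psi d \<psi> w - real (length w) * pressure d \<psi>)"
    using assms unfolding gibbs_measure_def by blast
  have "0 < measure \<nu> (cyl d w) \<and>
      \<bar>ln (measure \<nu> (cyl d w)) - (Psi d \<psi> w - real (length w) * pressure d \<psi>)\<bar> \<le> \<bar>ln C\<bar>"
    if "w \<in> allwords d" for w
  proof -
    define x where "x = Psi d \<psi> w - real (length w) * pressure d \<psi>"
    define m where "m = measure \<nu> (cyl d w)"
    have bounds: "exp x / C \<le> m" "m \<le> C * exp x" using gibbs[OF that] by (simp_all add: x_def m_def)
    then have "m > 0" using \<open>C > 0\<close> by (smt (verit) divide_pos_pos exp_gt_zero)
    have "ln (exp x / C) \<le> ln m" "ln m \<le> ln (C * exp x)"
      using bounds \<open>C > 0\<close> \<open>m > 0\<close> by (simp_all only: ln_le_cancel_iff divide_pos_pos mult_pos_pos exp_gt_zero)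
    then have "x - ln C \<le> ln m" "ln m \<le> ln C + x"
      using \<open>C > 0\<close> by (simp_all add: ln_div ln_mult)
    then show ?thesis using \<open>m > 0\<close> by (simp add: x_def m_def abs_le_iff)
  qed
  then show ?thesis using that by blast
qed

section \<open>Multifractal formalism for almost multiplicative weights\<close>

lemma ereal_le_Dmu_iff: "ereal c \<le> Dmu d \<mu> H \<longleftrightarrow> (\<forall>q. c \<le> q * H - tau d \<mu> q)"
  by (simp add: Dmu_def le_INF_iff)

locale almost_multiplicative =
  fixes d :: nat and \<mu> :: "bool list list \<Rightarrow> real" and K G :: real
  assumes pos: "\<And>w. w \<in> allwords d \<Longrightarrow> 0 < \<mu> w"
    and bounded: "\<And>w. w \<in> allwords d \<Longrightarrow> \<mu> w \<le> K"
    and almost_mult: "\<And>u v. u \<in> allwords d \<Longrightarrow> v \<in> allwords d \<Longrightarrow>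
      \<bar>log 2 (\<mu> (u @ v)) - log 2 (\<mu> u) - log 2 (\<mu> v)\<bar> \<le> G"

lemma gibbs_capacity_almost_multiplicative:
  assumes "K > 0" "\<alpha> \<ge> 0" "\<beta> \<ge> 0" "holder d \<psi>" "gibbs_measure d \<psi> \<nu>"
  obtains G where "almost_multiplicative d (cap d K \<alpha> \<beta> \<nu>) K G"
proof -
  define m where "m w = measure \<nu> (cyl d w)" for w
  obtain C where m_pos: "\<And>w. w \<in> allwords d \<Longrightarrow> 0 < m w"
    and ln_m: "\<And>w. w \<in> allwords d \<Longrightarrow> \<bar>ln (m w) - (Psi d \<psi> w - real (length w) * pressure d \<psi>)\<bar> \<le> C"
    using gibbs_ln_measure_cyl[OF assms(5)] unfolding m_def by blast
  obtain D where Psi_add: "\<And>u v. set u \<subseteq> letters d \<Longrightarrow> set v \<subseteq> letters d \<Longrightarrow>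
      \<bar>Psi d \<psi> (u @ v) - Psi d \<psi> u - Psi d \<psi> v\<bar> \<le> 2 * D"
    using holder_Psi_almost_additive[OF assms(4)] by blast
  have cap_eq: "cap d K \<alpha> \<beta> \<nu> w = K * m w powr \<alpha> * exp (- \<beta> * real (length w))" for w
    by (simp add: cap_def m_def)
  have ln_cap: "ln (cap d K \<alpha> \<beta> \<nu> w) = ln K + \<alpha> * ln (m w) - \<beta> * real (length w)"
    if "w \<in> allwords d" for w
    using m_pos[OF that] \<open>K > 0\<close> by (simp add: cap_eq ln_mult ln_powr)
  show ?thesis
  proof (rule that, unfold_locales)
    fix w assume w: "w \<in> allwords d"
    show "0 < cap d K \<alpha> \<beta> \<nu> w" using m_pos[OF w] \<open>K > 0\<close> by (simp add: cap_eq)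
    have "m w \<le> 1" using assms(5) by (simp add: gibbs_measure_def m_def prob_space.prob_le_1)
    then have "m w powr \<alpha> * exp (- \<beta> * real (length w)) \<le> 1"
      using m_pos[OF w] assms(2,3) by (intro mult_le_one) (auto simp: powr_le1)
    then show "cap d K \<alpha> \<beta> \<nu> w \<le> K"
      using \<open>K > 0\<close> mult_left_mono[of _ 1 K] by (simp add: cap_eq mult.assoc)
  next
    fix u v assume u: "u \<in> allwords d" and v: "v \<in> allwords d"
    then have uv: "u @ v \<in> allwords d" by (auto simp: allwords_def)
    define e where "e w = ln (m w) - (Psi d \<psi> w - real (length w) * pressure d \<psi>)" for w
    have "ln (cap d K \<alpha> \<beta> \<nu> (u @ v)) - ln (cap d K \<alpha> \<beta> \<nu> u) - ln (cap d K \<alpha> \<beta> \<nu> v)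
        = - ln K + \<alpha> * ((Psi d \<psi> (u @ v) - Psi d \<psi> u - Psi d \<psi> v) + (e (u @ v) - e u - e v))"
      unfolding ln_cap[OF uv] ln_cap[OF u] ln_cap[OF v] e_def by (simp add: algebra_simps)
    also have "\<bar>\<dots>\<bar> \<le> \<bar>ln K\<bar> + \<alpha> * (2 * D + 3 * C)"
    proof -
      have sum_le: "\<bar>(Psi d \<psi> (u @ v) - Psi d \<psi> u - Psi d \<psi> v) + (e (u @ v) - e u - e v)\<bar> \<le> 2 * D + 3 * C"
        using Psi_add[of u v] ln_m[OF u] ln_m[OF v] ln_m[OF uv] u v
        by (simp add: e_def allwords_def)
      show ?thesis
        using mult_left_mono[OF sum_le assms(2)]
          abs_triangle_ineq4[of "\<alpha> * ((Psi d \<psi> (u @ v) - Psi d \<psi> u - Psi d \<psi> v) + (e (u @ v) - e u - e v))" "ln K"]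
        by (simp add: abs_mult \<open>\<alpha> \<ge> 0\<close>)
    qed
    finally show "\<bar>log 2 (cap d K \<alpha> \<beta> \<nu> (u @ v)) - log 2 (cap d K \<alpha> \<beta> \<nu> u)
        - log 2 (cap d K \<alpha> \<beta> \<nu> v)\<bar> \<le> (\<bar>ln K\<bar> + \<alpha> * (2 * D + 3 * C)) / ln 2"
      by (simp add: log_def diff_divide_distrib[symmetric] abs_div divide_right_mono)
  qed
qed

context almost_multiplicative
begin

lemma G_nonneg: "G \<ge> 0"
proof -
  have "[replicate d False] \<in> allwords d" by (simp add: allwords_def letters_def)
  from almost_mult[OF this this] show ?thesis by linarith
qed

lemma abs_log_le_length:
  obtains M where "\<And>w. w \<in> allwords d \<Longrightarrow> \<bar>log 2 (\<mu> w)\<bar> \<le> M * real (length w)"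
proof -
  define M where "M = Max ((\<lambda>a. \<bar>log 2 (\<mu> [a])\<bar>) ` letters d) + G"
  have letter_le: "\<bar>log 2 (\<mu> [a])\<bar> \<le> M - G" if "a \<in> letters d" for a
    using that finite_letters by (simp add: M_def)
  have "\<bar>log 2 (\<mu> w)\<bar> \<le> M * real (length w)" if "w \<noteq> []" "set w \<subseteq> letters d" for w
    using that
  proof (induction w)
    case (Cons a w)
    show ?case
    proof (cases "w = []")
      case True
      then show ?thesis using letter_le[of a] Cons.prems G_nonneg by simp
    next
      case False
      then have a: "[a] \<in> allwords d" and w: "w \<in> allwords d"
        using Cons.prems by (auto simp: allwords_def Suc_le_eq)
      have "\<bar>log 2 (\<mu> ([a] @ w))\<bar> \<le> \<bar>log 2 (\<mu> [a])\<bar> + \<bar>log 2 (\<mu> w)\<bar> + G"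
        using almost_mult[OF a w] by linarith
      then show ?thesis using letter_le[of a] Cons False by (simp add: algebra_simps)
    qed
  qed simp
  then show ?thesis using that by (auto simp: allwords_def Suc_le_eq)
qed

lemma log_le_log_bound: "w \<in> allwords d \<Longrightarrow> log 2 (\<mu> w) \<le> log 2 K"
  using pos bounded by (intro log_mono) auto

lemma powr_eq_powr_log: "w \<in> allwords d \<Longrightarrow> \<mu> w powr q = 2 powr (q * log 2 (\<mu> w))"
  using pos powr_powr[of 2 "log 2 (\<mu> w)" q] by (simp add: mult.commute)

definition lq_sum :: "nat \<Rightarrow> real \<Rightarrow> real" where
  "lq_sum j q = (\<Sum>w\<in>words d j. \<mu> w powr q)"

lemma lq_sum_pos: "j \<ge> 1 \<Longrightarrow> 0 < lq_sum j q"
  unfolding lq_sum_def using pos words_subset_allwords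
  by (intro sum_pos finite_words words_nonempty) fastforce

lemma log_lq_sum_almost_additive:
  assumes "m \<ge> 1" "n \<ge> 1"
  shows "\<bar>log 2 (lq_sum (m + n) q) - log 2 (lq_sum m q) - log 2 (lq_sum n q)\<bar> \<le> \<bar>q\<bar> * G"
proof -
  have pointwise: "2 powr (- \<bar>q\<bar> * G) * (\<mu> u powr q * \<mu> v powr q) \<le> \<mu> (u @ v) powr q \<and>
      \<mu> (u @ v) powr q \<le> 2 powr (\<bar>q\<bar> * G) * (\<mu> u powr q * \<mu> v powr q)"
    if "u \<in> words d m" "v \<in> words d n" for u v
  proof -
    have u: "u \<in> allwords d" and v: "v \<in> allwords d"
      using that assms words_subset_allwords by blast+
    then have uv: "u @ v \<in> allwords d" by (auto simp: allwords_def)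
    have "\<bar>q * log 2 (\<mu> (u @ v)) - q * log 2 (\<mu> u) - q * log 2 (\<mu> v)\<bar> \<le> \<bar>q\<bar> * G"
      using mult_left_mono[OF almost_mult[OF u v], of "\<bar>q\<bar>"]
      by (simp add: abs_mult[symmetric] right_diff_distrib)
    then show ?thesis
      unfolding powr_eq_powr_log[OF u] powr_eq_powr_log[OF v] powr_eq_powr_log[OF uv]
      by (simp add: powr_add[symmetric] abs_le_iff)
  qed
  have split: "lq_sum (m + n) q = (\<Sum>u\<in>words d m. \<Sum>v\<in>words d n. \<mu> (u @ v) powr q)"
    unfolding lq_sum_def words_add sum.reindex[OF inj_on_append_words]
    by (simp add: sum.cartesian_product split_def)
  have product: "lq_sum m q * lq_sum n q = (\<Sum>u\<in>words d m. \<Sum>v\<in>words d n. \<mu> u powr q * \<mu> v powr q)"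
    unfolding lq_sum_def by (rule sum_product)
  have "2 powr (- \<bar>q\<bar> * G) * (lq_sum m q * lq_sum n q) \<le> lq_sum (m + n) q"
      "lq_sum (m + n) q \<le> 2 powr (\<bar>q\<bar> * G) * (lq_sum m q * lq_sum n q)"
    unfolding split product sum_distrib_left using pointwise by (auto intro!: sum_mono)
  then have "log 2 (2 powr (- \<bar>q\<bar> * G) * (lq_sum m q * lq_sum n q)) \<le> log 2 (lq_sum (m + n) q)"
      "log 2 (lq_sum (m + n) q) \<le> log 2 (2 powr (\<bar>q\<bar> * G) * (lq_sum m q * lq_sum n q))"
    using lq_sum_pos assms by (simp_all del: log_mult_pos)
  then show ?thesis
    using lq_sum_pos assms by (simp add: log_mult_pos abs_le_iff)
qed

lemma tau_LIMSEQ: "(\<lambda>j. - log 2 (lq_sum j q) / real j) \<longlonglongrightarrow> tau d \<mu> q"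
proof -
  have "convergent (\<lambda>j. log 2 (lq_sum j q) / real j)"
    by (intro almost_additive_convergent[where B = "\<bar>q\<bar> * G"] log_lq_sum_almost_additive)
  then have "convergent (\<lambda>j. - log 2 (lq_sum j q) / real j)"
    using convergent_minus_iff[of "\<lambda>j. log 2 (lq_sum j q) / real j"] by simp
  then show ?thesis by (simp add: tau_def lq_sum_def convergent_LIMSEQ_iff)
qed

definition mean_exponent :: "nat \<Rightarrow> real" where
  "mean_exponent j = (\<Sum>w\<in>words d j. - log 2 (\<mu> w)) / (real (card (words d j)) * real j)"

text \<open>Jensen's inequality for the convex function \<open>q \<mapsto> 2 powr q\<close>.\<close>

lemma lq_exponent_le_mean_exponent:
  assumes "j \<ge> 1"
  shows "- log 2 (lq_sum j q) / real j \<le> - real d + q * mean_exponent j"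
proof -
  define N where "N = real (card (words d j))"
  define y where "y w = q * log 2 (\<mu> w) * ln 2" for w
  have N: "N = 2 ^ (d * j)" by (simp add: N_def card_words)
  have "lq_sum j q = (\<Sum>w\<in>words d j. exp (y w))"
    unfolding lq_sum_def
  proof (intro sum.cong refl)
    fix w assume "w \<in> words d j"
    then have "w \<in> allwords d" using words_subset_allwords[OF assms] by blast
    then show "\<mu> w powr q = exp (y w)"
      unfolding powr_eq_powr_log[OF \<open>w \<in> allwords d\<close>] by (simp add: powr_def y_def)
  qed
  then have "N * exp ((\<Sum>w\<in>words d j. y w) / N) \<le> lq_sum j q"
    unfolding N_def by (simp add: card_mult_exp_mean_le_sum_exp finite_words words_nonempty)
  then have "log 2 (N * exp ((\<Sum>w\<in>words d j. y w) / N)) \<le> log 2 (lq_sum j q)"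
    using lq_sum_pos[OF assms] by (simp add: N del: log_mult_pos)
  also have "log 2 (N * exp ((\<Sum>w\<in>words d j. y w) / N))
      = real d * real j - real j * (q * mean_exponent j)"
    using assms by (simp add: N log_mult_pos log_exp y_def mean_exponent_def N_def[symmetric]
        sum_distrib_left[symmetric] sum_negf log_nat_power field_simps)
  finally show ?thesis using assms by (simp add: field_simps)
qed

lemma mean_exponent_lower:
  assumes "j \<ge> 1"
  shows "- log 2 K / real j \<le> mean_exponent j"
proof -
  have "- log 2 K \<le> - log 2 (\<mu> w)" if "w \<in> words d j" for w
    using log_le_log_bound that words_subset_allwords[OF assms] by force
  then have "real (card (words d j)) * (- log 2 K) \<le> (\<Sum>w\<in>words d j. - log 2 (\<mu> w))"
    using sum_mono[of "words d j" "\<lambda>_. - log 2 K"] by simp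
  then show ?thesis
    using assms finite_words words_nonempty
    by (simp add: mean_exponent_def field_simps card_gt_0_iff)
qed

lemma mean_exponent_bounded: obtains M where "\<And>j. \<bar>mean_exponent j\<bar> \<le> M"
proof -
  obtain M where M: "\<And>w. w \<in> allwords d \<Longrightarrow> \<bar>log 2 (\<mu> w)\<bar> \<le> M * real (length w)"
    using abs_log_le_length by blast
  have "\<bar>mean_exponent j\<bar> \<le> \<bar>M\<bar>" for j
  proof (cases "j \<ge> 1")
    case True
    have "\<bar>\<Sum>w\<in>words d j. - log 2 (\<mu> w)\<bar> \<le> (\<Sum>w\<in>words d j. \<bar>M\<bar> * real j)"
      using M words_subset_allwords[OF True]
      by (intro order.trans[OF sum_abs] sum_mono) (force simp: words_def intro: order.trans[OF _ mult_right_mono])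
    then show ?thesis
      using True finite_words words_nonempty
      by (simp add: mean_exponent_def abs_div abs_mult card_gt_0_iff field_simps)
  qed (auto simp: mean_exponent_def not_less_eq_eq)
  then show ?thesis using that by blast
qed

text \<open>Along a subsequence the mean exponents converge to some \<open>H\<close>; by the previous Jensen bound the
  Legendre transform of \<open>\<tau>\<close> is at least \<open>d\<close> there.\<close>

lemma tau_le_affine:
  obtains H where "H \<ge> 0" "\<And>q. tau d \<mu> q \<le> - real d + q * H"
proof -
  obtain M where "\<And>j. \<bar>mean_exponent j\<bar> \<le> M" using mean_exponent_bounded by blast
  then have "bounded (range (\<lambda>n. mean_exponent (Suc n)))"
    by (auto simp: bounded_iff)
  then obtain H r where "strict_mono r" and H: "((\<lambda>n. mean_exponent (Suc n)) \<circ> r) \<longlonglongrightarrow> H"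
    using bounded_imp_convergent_subsequence by blast
  define \<sigma> where "\<sigma> = Suc \<circ> r"
  have \<sigma>: "strict_mono \<sigma>" "\<And>n. \<sigma> n \<ge> 1"
    using \<open>strict_mono r\<close> by (auto simp: \<sigma>_def strict_mono_def)
  have H\<sigma>: "(\<lambda>n. mean_exponent (\<sigma> n)) \<longlonglongrightarrow> H" using H by (simp add: \<sigma>_def comp_def)
  have "tau d \<mu> q \<le> - real d + q * H" for q
  proof (rule LIMSEQ_le)
    show "(\<lambda>n. - log 2 (lq_sum (\<sigma> n) q) / real (\<sigma> n)) \<longlonglongrightarrow> tau d \<mu> q"
      using LIMSEQ_subseq_LIMSEQ[OF tau_LIMSEQ \<sigma>(1)] by (simp add: comp_def)
    show "(\<lambda>n. - real d + q * mean_exponent (\<sigma> n)) \<longlonglongrightarrow> - real d + q * H"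
      by (intro tendsto_intros H\<sigma>)
  qed (use lq_exponent_le_mean_exponent \<sigma>(2) in auto)
  moreover have "0 \<le> H"
  proof (rule LIMSEQ_le[OF _ H\<sigma>])
    have "(\<lambda>j. - log 2 K / real j) \<longlonglongrightarrow> 0" by real_asymp
    then show "(\<lambda>n. - log 2 K / real (\<sigma> n)) \<longlonglongrightarrow> 0"
      using LIMSEQ_subseq_LIMSEQ[OF _ \<sigma>(1)] by (simp add: comp_def)
  qed (use mean_exponent_lower \<sigma>(2) in auto)
  ultimately show ?thesis using that by blast
qed

lemma Dmu_level_set_witness:
  assumes "0 \<le> \<eta>"
  obtains H where "0 \<le> H" "ereal (real d * (1 - \<eta>)) \<le> Dmu d \<mu> H"
proof -
  obtain H where "0 \<le> H" and tau_le: "\<And>q. tau d \<mu> q \<le> - real d + q * H"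
    using tau_le_affine by blast
  have "real d * (1 - \<eta>) \<le> real d" using assms by (simp add: mult_left_le)
  then have "real d * (1 - \<eta>) \<le> q * H - tau d \<mu> q" for q using tau_le[of q] by linarith
  then show ?thesis using that[OF \<open>0 \<le> H\<close>] by (simp add: ereal_le_Dmu_iff)
qed

lemma exponent_below_Hl:
  assumes "0 \<le> \<eta>" "0 \<le> H" "H < Hl d \<mu> \<eta>"
  obtains q where "0 \<le> q" "q * H - tau d \<mu> q < real d * (1 - \<eta>)"
proof -
  define L where "L = {H. 0 \<le> H \<and> ereal (real d * (1 - \<eta>)) \<le> Dmu d \<mu> H}"
  obtain H0 where H0: "H0 \<in> L" using Dmu_level_set_witness[OF assms(1)] by (auto simp: L_def)
  have "bdd_below L" by (auto simp: L_def bdd_below_def)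
  then have "Hl d \<mu> \<eta> \<le> H'" if "H' \<in> L" for H'
    using cInf_lower[OF that] by (simp add: Hl_def L_def)
  then have "Hl d \<mu> \<eta> \<le> H0" "H \<notin> L" using H0 assms(3) by force+
  then obtain q where q: "q * H - tau d \<mu> q < real d * (1 - \<eta>)"
    using assms(2) by (auto simp: L_def ereal_le_Dmu_iff not_le)
  moreover have "0 \<le> q"
  proof (rule ccontr)
    assume "\<not> 0 \<le> q"
    then have "q * H0 \<le> q * H" using \<open>Hl d \<mu> \<eta> \<le> H0\<close> assms(3) by (simp add: mult_left_mono_neg)
    moreover have "real d * (1 - \<eta>) \<le> q * H0 - tau d \<mu> q" using H0 by (simp add: L_def ereal_le_Dmu_iff)
    ultimately show False using q by linarith
  qed
  ultimately show ?thesis using that by blast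
qed

lemma exponent_above_Hr:
  assumes "0 \<le> \<eta>" "Hr d \<mu> \<eta> < H"
  obtains q where "q \<le> 0" "q * H - tau d \<mu> q < real d * (1 - \<eta>)"
proof -
  define R where "R = {H. ereal (real d * (1 - \<eta>)) \<le> Dmu d \<mu> H}"
  obtain H0 where H0: "H0 \<in> R" using Dmu_level_set_witness[OF assms(1)] by (auto simp: R_def)
  have "H' \<le> - tau d \<mu> (-1) - real d * (1 - \<eta>)" if "H' \<in> R" for H'
    using that by (auto simp: R_def ereal_le_Dmu_iff dest: spec[of _ "-1"])
  then have "bdd_above R" by (auto simp: bdd_above_def)
  then have "H' \<le> Hr d \<mu> \<eta>" if "H' \<in> R" for H'
    using cSup_upper[OF that] by (simp add: Hr_def R_def)
  then have "H0 \<le> Hr d \<mu> \<eta>" "H \<notin> R" using H0 assms(2) by force+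
  then obtain q where q: "q * H - tau d \<mu> q < real d * (1 - \<eta>)"
    by (auto simp: R_def ereal_le_Dmu_iff not_le)
  moreover have "q \<le> 0"
  proof (rule ccontr)
    assume "\<not> q \<le> 0"
    then have "q * H0 \<le> q * H" using \<open>H0 \<le> Hr d \<mu> \<eta>\<close> assms(2) by simp
    moreover have "real d * (1 - \<eta>) \<le> q * H0 - tau d \<mu> q" using H0 by (simp add: R_def ereal_le_Dmu_iff)
    ultimately show False using q by linarith
  qed
  ultimately show ?thesis using that by blast
qed

text \<open>Chebyshev's inequality for the \<open>L\<^sup>q\<close>-sums.\<close>

lemma card_level_set_decay:
  assumes "q * H - tau d \<mu> q < c"
  obtains \<rho> where "\<rho> > 0" "\<forall>\<^sub>F j in sequentially.
    real (card {w\<in>words d j. 0 \<le> q * (log 2 (\<mu> w) + real j * H)}) \<le> 2 powr (real j * (c - \<rho>))"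
proof -
  define \<rho> where "\<rho> = (c - (q * H - tau d \<mu> q)) / 2"
  have "\<rho> > 0" using assms by (simp add: \<rho>_def)
  have "\<forall>\<^sub>F j in sequentially. tau d \<mu> q - \<rho> < - log 2 (lq_sum j q) / real j"
    using order_tendstoD(1)[OF tau_LIMSEQ] \<open>\<rho> > 0\<close> by simp
  then have "\<forall>\<^sub>F j in sequentially.
      real (card {w\<in>words d j. 0 \<le> q * (log 2 (\<mu> w) + real j * H)}) \<le> 2 powr (real j * (c - \<rho>))"
    using eventually_ge_at_top[of 1]
  proof eventually_elim
    case (elim j)
    define A where "A = {w\<in>words d j. 0 \<le> q * (log 2 (\<mu> w) + real j * H)}"
    have "A \<subseteq> allwords d" using words_subset_allwords[OF elim(2)] by (auto simp: A_def)
    have "real (card A) * 2 powr (- q * real j * H) = (\<Sum>w\<in>A. 2 powr (- q * real j * H))" by simp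
    also have "\<dots> \<le> (\<Sum>w\<in>A. \<mu> w powr q)"
      using \<open>A \<subseteq> allwords d\<close> by (intro sum_mono) (auto simp: A_def powr_eq_powr_log algebra_simps)
    also have "\<dots> \<le> lq_sum j q"
      unfolding lq_sum_def using pos words_subset_allwords[OF elim(2)]
      by (intro sum_mono2 finite_words) (auto simp: A_def)
    also have "\<dots> < 2 powr (- (real j * (tau d \<mu> q - \<rho>)))"
      using elim lq_sum_pos[OF elim(2)] by (simp add: log_less_iff[symmetric] field_simps)
    finally have "real (card A) < 2 powr (- (real j * (tau d \<mu> q - \<rho>))) / 2 powr (- q * real j * H)"
      by (simp add: field_simps)
    also have "\<dots> = 2 powr (- (real j * (tau d \<mu> q - \<rho>)) - - q * real j * H)"
      by (rule powr_diff[symmetric])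
    also have "\<dots> = 2 powr (real j * (c - \<rho>))"
      by (rule arg_cong[of _ _ "(powr) 2"]) (simp add: \<rho>_def field_simps)
    finally show ?case by (simp add: A_def)
  qed
  then show ?thesis using that \<open>\<rho> > 0\<close> by blast
qed


lemma card_below_Hl_decay:
  assumes "0 \<le> \<eta>" "\<delta> > 0"
  obtains \<rho> where "\<rho> > 0" "\<forall>\<^sub>F j in sequentially.
    real (card {w\<in>words d j. - log 2 (\<mu> w) < real j * (Hl d \<mu> \<eta> - \<delta>)})
      \<le> 2 powr (real j * (real d * (1 - \<eta>) - \<rho>))"
proof (cases "0 \<le> Hl d \<mu> \<eta> - \<delta>")
  case True
  define H where "H = Hl d \<mu> \<eta> - \<delta>"
  obtain q where "0 \<le> q" and q: "q * H - tau d \<mu> q < real d * (1 - \<eta>)"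
    using exponent_below_Hl[OF assms(1), of H] True assms(2) by (auto simp: H_def)
  obtain \<rho> where "\<rho> > 0" and decay: "\<forall>\<^sub>F j in sequentially.
      real (card {w\<in>words d j. 0 \<le> q * (log 2 (\<mu> w) + real j * H)})
        \<le> 2 powr (real j * (real d * (1 - \<eta>) - \<rho>))"
    using card_level_set_decay[OF q] by blast
  have card_le: "real (card {w\<in>words d j. - log 2 (\<mu> w) < real j * H})
      \<le> real (card {w\<in>words d j. 0 \<le> q * (log 2 (\<mu> w) + real j * H)})" for j
    using \<open>0 \<le> q\<close> by (intro of_nat_mono card_mono) (auto intro: finite_subset[OF _ finite_words])
  have "\<forall>\<^sub>F j in sequentially. real (card {w\<in>words d j. - log 2 (\<mu> w) < real j * H})
      \<le> 2 powr (real j * (real d * (1 - \<eta>) - \<rho>))"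
    using decay by (rule eventually_mono) (rule order_trans[OF card_le])
  then show ?thesis using that[OF \<open>\<rho> > 0\<close>] by (simp add: H_def)
next
  case False
  have "filterlim (\<lambda>j. (\<delta> - Hl d \<mu> \<eta>) * real j) at_top sequentially"
    using False by (intro filterlim_tendsto_pos_mult_at_top[OF tendsto_const]
        filterlim_real_sequentially) simp
  then have "\<forall>\<^sub>F j in sequentially. log 2 K < (\<delta> - Hl d \<mu> \<eta>) * real j \<and> j \<ge> 1"
    by (auto simp: filterlim_at_top_dense intro: eventually_conj eventually_ge_at_top)
  then have "\<forall>\<^sub>F j in sequentially.
      real (card {w\<in>words d j. - log 2 (\<mu> w) < real j * (Hl d \<mu> \<eta> - \<delta>)})
        \<le> 2 powr (real j * (real d * (1 - \<eta>) - 1))"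
  proof eventually_elim
    case (elim j)
    have "log 2 (\<mu> w) \<le> log 2 K" if "w \<in> words d j" for w
      using log_le_log_bound that words_subset_allwords[of j d] elim by force
    then have empty: "{w\<in>words d j. - log 2 (\<mu> w) < real j * (Hl d \<mu> \<eta> - \<delta>)} = {}"
      using elim by (force simp: algebra_simps)
    show ?case unfolding empty by simp
  qed
  then show ?thesis using that[of 1] by simp
qed

lemma card_above_Hr_decay:
  assumes "0 \<le> \<eta>" "\<delta> > 0"
  obtains \<rho> where "\<rho> > 0" "\<forall>\<^sub>F j in sequentially.
    real (card {w\<in>words d j. real j * (Hr d \<mu> \<eta> + \<delta>) < - log 2 (\<mu> w)})
      \<le> 2 powr (real j * (real d * (1 - \<eta>) - \<rho>))"
proof -
  define H where "H = Hr d \<mu> \<eta> + \<delta>"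
  obtain q where "q \<le> 0" and q: "q * H - tau d \<mu> q < real d * (1 - \<eta>)"
    using exponent_above_Hr[OF assms(1), of H] assms(2) by (auto simp: H_def)
  obtain \<rho> where "\<rho> > 0" and decay: "\<forall>\<^sub>F j in sequentially.
      real (card {w\<in>words d j. 0 \<le> q * (log 2 (\<mu> w) + real j * H)})
        \<le> 2 powr (real j * (real d * (1 - \<eta>) - \<rho>))"
    using card_level_set_decay[OF q] by blast
  have card_le: "real (card {w\<in>words d j. real j * H < - log 2 (\<mu> w)})
      \<le> real (card {w\<in>words d j. 0 \<le> q * (log 2 (\<mu> w) + real j * H)})" for j
    using \<open>q \<le> 0\<close> by (intro of_nat_mono card_mono) (auto intro: finite_subset[OF _ finite_words] mult_nonpos_nonpos)
  have "\<forall>\<^sub>F j in sequentially. real (card {w\<in>words d j. real j * H < - log 2 (\<mu> w)})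
      \<le> 2 powr (real j * (real d * (1 - \<eta>) - \<rho>))"
    using decay by (rule eventually_mono) (rule order_trans[OF card_le])
  then show ?thesis using that[OF \<open>\<rho> > 0\<close>] by (simp add: H_def)
qed


section \<open>Sampled words\<close>

lemma AE_sampled_words_between_exponents:
  fixes \<Omega> :: "'o measure" and p :: "bool list list \<Rightarrow> 'o \<Rightarrow> bool"
  assumes "prob_space \<Omega>" "0 \<le> \<eta>" "\<delta> > 0"
    and meas: "\<And>w. w \<in> allwords d \<Longrightarrow> {\<omega>\<in>space \<Omega>. p w \<omega>} \<in> sets \<Omega>"
    and prob: "\<And>w. w \<in> allwords d \<Longrightarrow>
      measure \<Omega> {\<omega>\<in>space \<Omega>. p w \<omega>} = 2 powr (- (real d * (1 - \<eta>) * real (length w)))"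
  shows "AE \<omega> in \<Omega>. \<forall>\<^sub>F j in sequentially. \<forall>w\<in>words d j. p w \<omega> \<longrightarrow>
    real j * (Hl d \<mu> \<eta> - \<delta>) \<le> - log 2 (\<mu> w) \<and> - log 2 (\<mu> w) \<le> real j * (Hr d \<mu> \<eta> + \<delta>)"
proof -
  have none_sampled: "AE \<omega> in \<Omega>. \<forall>\<^sub>F j in sequentially. \<forall>w\<in>words d j. P j w \<longrightarrow> \<not> p w \<omega>"
    if "\<rho> > 0" and decay: "\<forall>\<^sub>F j in sequentially.
      real (card {w\<in>words d j. P j w}) \<le> 2 powr (real j * (real d * (1 - \<eta>) - \<rho>))" for P \<rho>
  proof -
    define B where "B j = {w\<in>words d j. P j w} \<inter> allwords d" for j
    have "finite (B j)" for j unfolding B_def using finite_words by auto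
    have card_le: "real (card (B j)) \<le> real (card {w\<in>words d j. P j w})" for j
      unfolding B_def by (intro of_nat_mono card_mono) (auto intro: finite_subset[OF _ finite_words])
    have "\<forall>\<^sub>F j in sequentially. real (card (B j)) \<le> 2 powr (real j * (real d * (1 - \<eta>) - \<rho>))"
      using decay by (rule eventually_mono) (rule order_trans[OF card_le])
    then have "AE \<omega> in \<Omega>. \<forall>\<^sub>F j in sequentially. \<forall>w\<in>B j. \<not> p w \<omega>"
      using \<open>prob_space \<Omega>\<close> \<open>\<rho> > 0\<close> \<open>\<And>j. finite (B j)\<close> meas prob
      by (intro AE_eventually_none_sampled[where c = "real d * (1 - \<eta>)"])
        (auto simp: B_def words_def mult.commute)
    then show ?thesis
    proof (rule AE_mp, intro AE_I2 impI)
      fix \<omega> assume "\<forall>\<^sub>F j in sequentially. \<forall>w\<in>B j. \<not> p w \<omega>"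
      then show "\<forall>\<^sub>F j in sequentially. \<forall>w\<in>words d j. P j w \<longrightarrow> \<not> p w \<omega>"
        using eventually_ge_at_top[of 1]
        by eventually_elim (use words_subset_allwords in \<open>auto simp: B_def\<close>)
    qed
  qed
  obtain \<rho>1 where "\<rho>1 > 0"
    and "\<forall>\<^sub>F j in sequentially. real (card {w\<in>words d j. - log 2 (\<mu> w) < real j * (Hl d \<mu> \<eta> - \<delta>)})
      \<le> 2 powr (real j * (real d * (1 - \<eta>) - \<rho>1))"
    using card_below_Hl_decay[OF assms(2,3)] by blast
  from none_sampled[OF this] have below:
    "AE \<omega> in \<Omega>. \<forall>\<^sub>F j in sequentially. \<forall>w\<in>words d j.
      - log 2 (\<mu> w) < real j * (Hl d \<mu> \<eta> - \<delta>) \<longrightarrow> \<not> p w \<omega>" .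
  obtain \<rho>2 where "\<rho>2 > 0"
    and "\<forall>\<^sub>F j in sequentially. real (card {w\<in>words d j. real j * (Hr d \<mu> \<eta> + \<delta>) < - log 2 (\<mu> w)})
      \<le> 2 powr (real j * (real d * (1 - \<eta>) - \<rho>2))"
    using card_above_Hr_decay[OF assms(2,3)] by blast
  from none_sampled[OF this] have above:
    "AE \<omega> in \<Omega>. \<forall>\<^sub>F j in sequentially. \<forall>w\<in>words d j.
      real j * (Hr d \<mu> \<eta> + \<delta>) < - log 2 (\<mu> w) \<longrightarrow> \<not> p w \<omega>" .
  from below above show ?thesis
  proof eventually_elim
    case (elim \<omega>)
    from elim(1,2) show ?case by eventually_elim (auto simp: not_less[symmetric])
  qed
qed

lemma AE_sampled_words_vanishing_tolerance:
  fixes \<Omega> :: "'o measure" and p :: "bool list list \<Rightarrow> 'o \<Rightarrow> bool"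
  assumes "prob_space \<Omega>" "0 \<le> \<eta>"
    and meas: "\<And>w. w \<in> allwords d \<Longrightarrow> {\<omega>\<in>space \<Omega>. p w \<omega>} \<in> sets \<Omega>"
    and prob: "\<And>w. w \<in> allwords d \<Longrightarrow>
      measure \<Omega> {\<omega>\<in>space \<Omega>. p w \<omega>} = 2 powr (- (real d * (1 - \<eta>) * real (length w)))"
  shows "AE \<omega> in \<Omega>. \<exists>\<epsilon>::nat \<Rightarrow> real. (\<forall>j. 0 < \<epsilon> j) \<and> \<epsilon> \<longlonglongrightarrow> 0 \<and>
    (\<forall>\<^sub>F j in sequentially. \<forall>w\<in>words d j. p w \<omega> \<longrightarrow>
      real j * (Hl d \<mu> \<eta> - \<epsilon> j) \<le> - log 2 (\<mu> w) \<and> - log 2 (\<mu> w) \<le> real j * (Hr d \<mu> \<eta> + \<epsilon> j))"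
proof -
  define dev where "dev j w = max (Hl d \<mu> \<eta> + log 2 (\<mu> w) / real j) (- log 2 (\<mu> w) / real j - Hr d \<mu> \<eta>)"
    for j w
  have within_iff: "real j * (Hl d \<mu> \<eta> - e) \<le> - log 2 (\<mu> w) \<and> - log 2 (\<mu> w) \<le> real j * (Hr d \<mu> \<eta> + e)
      \<longleftrightarrow> dev j w \<le> e" if "j \<ge> 1" for j w e
    using that by (simp add: dev_def field_simps)
  have "AE \<omega> in \<Omega>. \<forall>n. \<forall>\<^sub>F j in sequentially. \<forall>w\<in>words d j. p w \<omega> \<longrightarrow>
    real j * (Hl d \<mu> \<eta> - 1 / real (Suc n)) \<le> - log 2 (\<mu> w) \<and>
    - log 2 (\<mu> w) \<le> real j * (Hr d \<mu> \<eta> + 1 / real (Suc n))"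
    unfolding AE_all_countable
    by (intro allI AE_sampled_words_between_exponents[OF assms(1,2) _ meas prob]) simp
  then show ?thesis
  proof (rule AE_mp, intro AE_I2 impI)
    fix \<omega> assume sampled: "\<forall>n. \<forall>\<^sub>F j in sequentially. \<forall>w\<in>words d j. p w \<omega> \<longrightarrow>
      real j * (Hl d \<mu> \<eta> - 1 / real (Suc n)) \<le> - log 2 (\<mu> w) \<and>
      - log 2 (\<mu> w) \<le> real j * (Hr d \<mu> \<eta> + 1 / real (Suc n))"
    define F where "F j = dev j ` {w\<in>words d j. p w \<omega>}" for j
    have "\<forall>\<^sub>F j in sequentially. \<forall>x\<in>F j. x \<le> e" if "e > 0" for e
    proof -
      obtain n where n: "1 / real (Suc n) < e" using \<open>e > 0\<close> nat_approx_posE by blast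
      from sampled[rule_format, of n] eventually_ge_at_top[of 1] show ?thesis
      proof eventually_elim
        case (elim j)
        have "dev j w \<le> e" if "w \<in> words d j" "p w \<omega>" for w
          using elim(1) that within_iff[OF elim(2), of "1 / real (Suc n)" w] n by auto
        then show ?case by (auto simp: F_def)
      qed
    qed
    then obtain \<epsilon> where "\<forall>j. 0 < \<epsilon> j" "\<epsilon> \<longlonglongrightarrow> 0" "\<And>j. \<forall>x\<in>F j. x \<le> \<epsilon> j"
      using vanishing_bound_of_finite_sets[of F] finite_words by (auto simp: F_def)
    moreover have "\<forall>\<^sub>F j in sequentially. \<forall>w\<in>words d j. p w \<omega> \<longrightarrow>
      real j * (Hl d \<mu> \<eta> - \<epsilon> j) \<le> - log 2 (\<mu> w) \<and> - log 2 (\<mu> w) \<le> real j * (Hr d \<mu> \<eta> + \<epsilon> j)"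
      using eventually_ge_at_top[of 1] by eventually_elim (use calculation in \<open>auto simp: within_iff F_def\<close>)
    ultimately show "\<exists>\<epsilon>::nat \<Rightarrow> real. (\<forall>j. 0 < \<epsilon> j) \<and> \<epsilon> \<longlonglongrightarrow> 0 \<and>
      (\<forall>\<^sub>F j in sequentially. \<forall>w\<in>words d j. p w \<omega> \<longrightarrow>
        real j * (Hl d \<mu> \<eta> - \<epsilon> j) \<le> - log 2 (\<mu> w) \<and> - log 2 (\<mu> w) \<le> real j * (Hr d \<mu> \<eta> + \<epsilon> j))"
      by blast
  qed
qed

end

theorem proposition3:
  fixes d :: nat and K \<alpha> \<beta> \<eta> :: real
    and \<psi> :: "(nat \<Rightarrow> bool list) \<Rightarrow> real"
    and \<nu> :: "(nat \<Rightarrow> bool list) measure"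
    and \<Omega> :: "'o measure"
    and p :: "bool list list \<Rightarrow> 'o \<Rightarrow> bool"
  assumes "d \<ge> 1"
    and "K > 0" and "\<alpha> > 0" and "\<beta> \<ge> 0"
    and "holder d \<psi>" and "\<not> cohom_const d \<psi>"
    and "gibbs_measure d \<psi> \<nu>"
    and "0 < \<eta>" and "\<eta> < 1"
    and "prob_space \<Omega>"
    and "prob_space.indep_vars \<Omega> (\<lambda>_. count_space UNIV) p (allwords d)"
    and "\<forall>w\<in>allwords d. prob_space.prob \<Omega> {\<omega>\<in>space \<Omega>. p w \<omega>}
            = 2 powr (- (real d * (1 - \<eta>) * real (length w)))"
  shows "AE \<omega> in \<Omega>. \<exists>\<epsilon>::nat \<Rightarrow> real. (\<forall>j. 0 < \<epsilon> j) \<and> \<epsilon> \<longlonglongrightarrow> 0 \<and>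
           (\<forall>\<^sub>F j in sequentially. \<forall>w\<in>words d j. p w \<omega> \<longrightarrow>
              real j * (Hl d (cap d K \<alpha> \<beta> \<nu>) \<eta> - \<epsilon> j) \<le> - log 2 (cap d K \<alpha> \<beta> \<nu> w) \<and>
              - log 2 (cap d K \<alpha> \<beta> \<nu> w) \<le> real j * (Hr d (cap d K \<alpha> \<beta> \<nu>) \<eta> + \<epsilon> j))"
proof -
  obtain G where "almost_multiplicative d (cap d K \<alpha> \<beta> \<nu>) K G"
    using gibbs_capacity_almost_multiplicative[of K \<alpha> \<beta> d \<psi> \<nu>] assms(2-5,7) by auto
  then interpret almost_multiplicative d "cap d K \<alpha> \<beta> \<nu>" K G .
  have "{\<omega>\<in>space \<Omega>. p w \<omega>} \<in> sets \<Omega>" if "w \<in> allwords d" for w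
  proof -
    have "p w \<in> measurable \<Omega> (count_space UNIV)"
      using assms(11) that by (auto simp: prob_space.indep_vars_def2[OF assms(10)])
    from measurable_sets[OF this, of "{True}"] show ?thesis by (simp add: vimage_def Int_def conj_commute)
  qed
  then show ?thesis
    using AE_sampled_words_vanishing_tolerance[OF assms(10)] assms(8,12) by simp
qed

end
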